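(* In any execution of $\mathcal{U}$, if an operation $o$ is done at time $T$, then for all times $T' \geq T$, $h(o) \neq (t(o), NULL)$ at $T'$.
   Context: Model: an asynchronous shared-memory system with possibly infinitely many processes, any of which may crash, communicating via atomic shared objects. A fetch-and-increment (F\&I) object stores an integer; F\&I$(C)$ atomically returns the current value and increments it. A generalized-compare-and-swap (GCAS) object $O$ stores a value and supports Read$(O)$ and GCAS$(c, O, v_1, v_2)$, which atomically does: if $c(\text{current value of } O, v_1)$ holds then set $O := v_2$ and return true, else return false. Tuples are compared componentwise for $=$; GCAS$(>, A, (t,-,-), v)$ succeeds iff the time field of $A$ is strictly greater than $t$. Implemented type $\mathcal{T} = (OP, RES, Q, \delta)$ with initial state $s_0$; a procedure $apply_{\mathcal{T}}(o,s)$ returns some $(s',r)$ with $(s,o,s',r)\in\delta$. $NULL$ is a value different from every response of $\mathcal{T}$, and $NOOP$ is a name different from every operation of $\mathcal{T}$. Algorithm $\mathcal{U}$: each process $p$ owns a GCAS object $H_p$ with fields $(time, response)$. Shared objects: F\&I object $C$, initially $1$; GCAS object $A$ with fields $(time, op, ptr)$, initially $(0, NOOP, h(NOOP))$, where $h(NOOP)$ is a pointer to an immutable location containing $(0,\perp)$; GCAS object $S$ with fields $(time, state, response, ptr)$, initially $(0, s_0, \perp, h(NOOP))$. Process $p$ performs operation $o$ by calling DoOp$(o)$: (1) DoOp$(o)$ invoked; (2) $t := $ F\&I$(C)$; (3) $H_p := (t, NULL)$; (4) while $H_p = (t, NULL)$ do: (5) $(t^*, s^*, r^*, roptr^* ) :=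 S$; (6) GCAS$(=, *roptr^*, (t^*, NULL), (t^*, r^* ))$; (7) GCAS$(>, A, (t,-,-), (t, o, \&H_p))$; (8) $(t', o', roptr') := A$; (9) $(\hat t, \hat r) := *roptr'$; (10) if $(\hat t,\hat r) = (t', NULL)$ then (11) $(s', r') := apply_{\mathcal{T}}(o', s^* )$; (12) GCAS$(=, S, (t^*,s^*,r^*,roptr^* ), (t', s', r', roptr'))$; (13) else GCAS$(=, A, (t', o', roptr'), (t, o, \&H_p))$; end while; (14) return $H_p.response$. Notation: an "operation" $o$ means one invocation of DoOp$(o)$. $p(o)$ is the process executing it; $t(o)$ is the value returned by its F\&I at line 2, or $\infty$ if line 2 has not been executed; $h(o)$ is $H_{p(o)}$. Operation $o$ is done at time $T$ if at some time $T'\le T$, $h(o) = (t(o), r)$ with $r \neq NULL$. *)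

theory Defs
  imports Main
begin

text \<open>Response-like values: NULL, the initial value bottom, or a genuine response of T.\<close>
datatype 'r rv = Null | Bot | Resp 'r

text \<open>Pointers: h(NOOP) (immutable, contains (0, bottom)) or the object H_p of process p.\<close>
datatype 'p loc = HNoop | HProc 'p

text \<open>Program counter: Idle (no pending DoOp), or the next line to execute.\<close>
datatype pcv = Idle | L2 | L3 | L4 | L5 | L6 | L7 | L8 | L9 | L10 | L11 | L12 | L13 | L14

text \<open>Local state of a process. The operation field of A uses None for NOOP.\<close>
record ('p, 'o, 's, 'r) lstate =
  pc :: pcv
  cnt :: nat            \<comment> \<open>number of completed DoOp invocations of this process\<close>
  opr :: 'o
  lt :: nat
  ts :: nat
  ss :: 's
  rs :: "'r rv"
  rps :: "'p loc"
  tp :: nat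
  opp :: "'o option"
  rpp :: "'p loc"
  th :: nat
  rh :: "'r rv"
  sp :: 's
  rp :: "'r rv"
  ret :: "'r rv"

record ('p, 'o, 's, 'r) config =
  Cc :: nat
  Aa :: "nat \<times> 'o option \<times> 'p loc"
  Ss :: "nat \<times> 's \<times> 'r rv \<times> 'p loc"
  Hh :: "'p \<Rightarrow> nat \<times> 'r rv"
  Loc :: "'p \<Rightarrow> ('p, 'o, 's, 'r) lstate"

definition deref :: "('p, 'o, 's, 'r) config \<Rightarrow> 'p loc \<Rightarrow> nat \<times> 'r rv" where
  "deref c x = (case x of HNoop \<Rightarrow> (0, Bot) | HProc q \<Rightarrow> Hh c q)"

definition updL :: "('p, 'o, 's, 'r) config \<Rightarrow> 'p \<Rightarrow> ('p, 'o, 's, 'r) lstate \<Rightarrow> ('p, 'o, 's, 'r) config" where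
  "updL c p l = c\<lparr>Loc := (Loc c)(p := l)\<rparr>"

definition init_local :: "('p, 'o, 's, 'r) lstate" where
  "init_local = \<lparr>pc = Idle, cnt = 0, opr = undefined, lt = undefined, ts = undefined,
     ss = undefined, rs = undefined, rps = undefined, tp = undefined, opp = undefined,
     rpp = undefined, th = undefined, rh = undefined, sp = undefined, rp = undefined,
     ret = undefined\<rparr>"

text \<open>Initial configuration. H_p initially (0, bottom) (not specified in the paper).\<close>
definition init_config :: "'s \<Rightarrow> ('p, 'o, 's, 'r) config" where
  "init_config s0 = \<lparr>Cc = 1, Aa = (0, None, HNoop), Ss = (0, s0, Bot, HNoop),
     Hh = (\<lambda>q. (0, Bot)), Loc = (\<lambda>q. init_local)\<rparr>"

text \<open>One atomic step of process p (each numbered line is one atomic step).\<close>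
inductive pstep :: "('s \<times> 'o \<times> 's \<times> 'r) set \<Rightarrow> 'p \<Rightarrow> ('p, 'o, 's, 'r) config \<Rightarrow> ('p, 'o, 's, 'r) config \<Rightarrow> bool"
  for \<delta> :: "('s \<times> 'o \<times> 's \<times> 'r) set" where
  line1: "pc (Loc c p) = Idle \<Longrightarrow>
    pstep \<delta> p c (updL c p ((Loc c p)\<lparr>pc := L2, opr := x\<rparr>))"
| line2: "pc (Loc c p) = L2 \<Longrightarrow>
    pstep \<delta> p c (updL (c\<lparr>Cc := Cc c + 1\<rparr>) p ((Loc c p)\<lparr>pc := L3, lt := Cc c\<rparr>))"
| line3: "pc (Loc c p) = L3 \<Longrightarrow>
    pstep \<delta> p c (updL (c\<lparr>Hh := (Hh c)(p := (lt (Loc c p), Null))\<rparr>) p ((Loc c p)\<lparr>pc := L4\<rparr>))"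
| line4: "pc (Loc c p) = L4 \<Longrightarrow>
    pstep \<delta> p c (updL c p ((Loc c p)\<lparr>pc := (if Hh c p = (lt (Loc c p), Null) then L5 else L14)\<rparr>))"
| line5: "pc (Loc c p) = L5 \<Longrightarrow> Ss c = (a, b, d, e) \<Longrightarrow>
    pstep \<delta> p c (updL c p ((Loc c p)\<lparr>pc := L6, ts := a, ss := b, rs := d, rps := e\<rparr>))"
| line6: "pc (Loc c p) = L6 \<Longrightarrow>
    pstep \<delta> p c (updL
      (case rps (Loc c p) of
         HNoop \<Rightarrow> c
       | HProc q \<Rightarrow> (if Hh c q = (ts (Loc c p), Null)
                     then c\<lparr>Hh := (Hh c)(q := (ts (Loc c p), rs (Loc c p)))\<rparr> else c))
      p ((Loc c p)\<lparr>pc := L7\<rparr>))"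
| line7: "pc (Loc c p) = L7 \<Longrightarrow>
    pstep \<delta> p c (updL
      (if fst (Aa c) > lt (Loc c p)
       then c\<lparr>Aa := (lt (Loc c p), Some (opr (Loc c p)), HProc p)\<rparr> else c)
      p ((Loc c p)\<lparr>pc := L8\<rparr>))"
| line8: "pc (Loc c p) = L8 \<Longrightarrow> Aa c = (a, b, d) \<Longrightarrow>
    pstep \<delta> p c (updL c p ((Loc c p)\<lparr>pc := L9, tp := a, opp := b, rpp := d\<rparr>))"
| line9: "pc (Loc c p) = L9 \<Longrightarrow> deref c (rpp (Loc c p)) = (a, b) \<Longrightarrow>
    pstep \<delta> p c (updL c p ((Loc c p)\<lparr>pc := L10, th := a, rh := b\<rparr>))"
| line10: "pc (Loc c p) = L10 \<Longrightarrow>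
    pstep \<delta> p c (updL c p ((Loc c p)\<lparr>pc :=
      (if (th (Loc c p), rh (Loc c p)) = (tp (Loc c p), Null) then L11 else L13)\<rparr>))"
| line11: "pc (Loc c p) = L11 \<Longrightarrow> opp (Loc c p) = Some x \<Longrightarrow>
    (ss (Loc c p), x, s', r) \<in> \<delta> \<Longrightarrow>
    pstep \<delta> p c (updL c p ((Loc c p)\<lparr>pc := L12, sp := s', rp := Resp r\<rparr>))"
| line12: "pc (Loc c p) = L12 \<Longrightarrow>
    pstep \<delta> p c (updL
      (if Ss c = (ts (Loc c p), ss (Loc c p), rs (Loc c p), rps (Loc c p))
       then c\<lparr>Ss := (tp (Loc c p), sp (Loc c p), rp (Loc c p), rpp (Loc c p))\<rparr> else c)
      p ((Loc c p)\<lparr>pc := L4\<rparr>))"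
| line13: "pc (Loc c p) = L13 \<Longrightarrow>
    pstep \<delta> p c (updL
      (if Aa c = (tp (Loc c p), opp (Loc c p), rpp (Loc c p))
       then c\<lparr>Aa := (lt (Loc c p), Some (opr (Loc c p)), HProc p)\<rparr> else c)
      p ((Loc c p)\<lparr>pc := L4\<rparr>))"
| line14: "pc (Loc c p) = L14 \<Longrightarrow>
    pstep \<delta> p c (updL c p ((Loc c p)\<lparr>pc := Idle, ret := snd (Hh c p), cnt := Suc (cnt (Loc c p))\<rparr>))"

text \<open>An execution: a sequence of configurations indexed by time, starting in the
  initial configuration; each transition is an atomic step of some process, or a
  stutter (allowing finite executions, crashes, and arbitrary scheduling).\<close>
definition execution :: "('s \<times> 'o \<times> 's \<times> 'r) set \<Rightarrow> 's \<Rightarrow> (nat \<Rightarrow> ('p, 'o, 's, 'r) config) \<Rightarrow> bool" where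
  "execution \<delta> s0 exe \<longleftrightarrow> exe 0 = init_config s0 \<and>
     (\<forall>i. (\<exists>q. pstep \<delta> q (exe i) (exe (Suc i))) \<or> exe (Suc i) = exe i)"

text \<open>Operations are identified by (p, k): the k-th (0-based) DoOp invocation of process p.
  op_time exe p k v: t(o) = v, i.e. the F\&I at line 2 of that invocation returned v.
  If no such v exists, t(o) is infinity.\<close>
definition op_time :: "(nat \<Rightarrow> ('p, 'o, 's, 'r) config) \<Rightarrow> 'p \<Rightarrow> nat \<Rightarrow> nat \<Rightarrow> bool" where
  "op_time exe p k v \<longleftrightarrow> (\<exists>i. pc (Loc (exe i) p) = L2 \<and> cnt (Loc (exe i) p) = k \<and>
      pc (Loc (exe (Suc i)) p) = L3 \<and> lt (Loc (exe (Suc i)) p) = v)"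

definition op_done :: "(nat \<Rightarrow> ('p, 'o, 's, 'r) config) \<Rightarrow> 'p \<Rightarrow> nat \<Rightarrow> nat \<Rightarrow> bool" where
  "op_done exe p k T \<longleftrightarrow> (\<exists>v. op_time exe p k v \<and>
      (\<exists>T'\<le>T. \<exists>r. Hh (exe T') p = (v, r) \<and> r \<noteq> Null))"

end

theory Submission
  imports Defs
begin

text \<open>Once H_p holds (t(o), r) with r \<noteq> NULL, it can only be overwritten by line 3 of a
  later invocation of p, which writes a strictly larger timestamp, or by line 6 of some
  process, which never writes NULL. Timestamps in H_p never decrease, so the value
  (t(o), NULL) can never reappear. Both facts need an invariant: every timestamp in H is
  below the counter C, so the one line 3 writes is larger than the old one, and the
  responses in S, which line 6 copies, are never NULL.\<close>

lemma stable_along_execution: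
  assumes "execution \<delta> s0 exe" and "P (exe m)" and "m \<le> n"
    and "\<And>i q. m \<le> i \<Longrightarrow> P (exe i) \<Longrightarrow> pstep \<delta> q (exe i) (exe (Suc i)) \<Longrightarrow> P (exe (Suc i))"
  shows "P (exe n)"
  using \<open>m \<le> n\<close>
proof (induction n rule: dec_induct)
  case base
  show ?case by (fact \<open>P (exe m)\<close>)
next
  case (step i)
  from \<open>execution \<delta> s0 exe\<close>
  have "(\<exists>q. pstep \<delta> q (exe i) (exe (Suc i))) \<or> exe (Suc i) = exe i"
    by (simp add: execution_def)
  then show ?case using step assms(4) by auto
qed

definition config_inv :: "('p, 'o, 's, 'r) config \<Rightarrow> bool" where
  "config_inv c \<longleftrightarrow> (\<forall>q. fst (Hh c q) < Cc c) \<and>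
     (\<forall>q. pc (Loc c q) = L3 \<longrightarrow> fst (Hh c q) < lt (Loc c q) \<and> lt (Loc c q) < Cc c) \<and>
     fst (snd (snd (Ss c))) \<noteq> Null \<and>
     (\<forall>q. pc (Loc c q) = L6 \<longrightarrow> rs (Loc c q) \<noteq> Null) \<and>
     (\<forall>q. pc (Loc c q) = L12 \<longrightarrow> rp (Loc c q) \<noteq> Null)"

lemma config_inv_init: "config_inv (init_config s0)"
  by (simp add: config_inv_def init_config_def init_local_def)

lemma config_inv_step:
  assumes "pstep \<delta> p c c'" and "config_inv c"
  shows "config_inv c'"
  using assms
proof (induction rule: pstep.induct)
  case (line2 c p)
  then show ?case by (auto simp: config_inv_def updL_def; metis less_SucI)
next
  case (line6 c p)
  then show ?case
    by (auto simp: config_inv_def updL_def split: loc.splits if_splits; metis fst_conv)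
qed (auto simp: config_inv_def updL_def split: loc.splits if_splits)

lemma config_inv_execution:
  assumes "execution \<delta> s0 exe"
  shows "config_inv (exe n)"
proof (rule stable_along_execution[OF assms, where m = 0])
  show "config_inv (exe 0)"
    using assms config_inv_init by (simp add: execution_def)
qed (auto intro: config_inv_step)

definition settled :: "('p, 'o, 's, 'r) config \<Rightarrow> 'p \<Rightarrow> nat \<Rightarrow> bool" where
  "settled c p v \<longleftrightarrow> v \<le> fst (Hh c p) \<and> Hh c p \<noteq> (v, Null)"

lemma settled_step:
  assumes "pstep \<delta> q c c'" and "config_inv c" and "settled c p v"
  shows "settled c' p v"
  using assms
  by (induction rule: pstep.induct)
    (auto simp: settled_def config_inv_def updL_def split: loc.splits if_splits)

definition past_FAI :: "('p, 'o, 's, 'r) config \<Rightarrow> 'p \<Rightarrow> nat \<Rightarrow> bool" where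
  "past_FAI c p k \<longleftrightarrow>
     k < cnt (Loc c p) \<or> (cnt (Loc c p) = k \<and> pc (Loc c p) \<notin> {Idle, L2})"

lemma past_FAI_step:
  assumes "pstep \<delta> q c c'" and "past_FAI c p k"
  shows "past_FAI c' p k"
  using assms
  by (induction rule: pstep.induct) (auto simp: past_FAI_def updL_def split: loc.splits if_splits)

lemma cnt_step:
  assumes "pstep \<delta> q c c'" and "pc (Loc c p) \<noteq> L14"
  shows "cnt (Loc c' p) = cnt (Loc c p)"
  using assms
  by (induction rule: pstep.induct) (auto simp: updL_def split: loc.splits if_splits)

lemma op_time_unique:
  assumes exe: "execution \<delta> s0 exe" and "op_time exe p k v" and "op_time exe p k w"
  shows "v = w"
proof -
  have FAI_before: "\<not> (pc (Loc (exe j) p) = L2 \<and> cnt (Loc (exe j) p) = k)"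
    if "pc (Loc (exe i) p) = L2" "cnt (Loc (exe i) p) = k" "pc (Loc (exe (Suc i)) p) = L3"
      "i < j" for i j
  proof -
    from exe have "(\<exists>q. pstep \<delta> q (exe i) (exe (Suc i))) \<or> exe (Suc i) = exe i"
      by (simp add: execution_def)
    with that(1,2) have "cnt (Loc (exe (Suc i)) p) = k"
      using cnt_step by fastforce
    with that(3) have "past_FAI (exe (Suc i)) p k"
      by (simp add: past_FAI_def)
    then have "past_FAI (exe j) p k"
      using Suc_leI[OF \<open>i < j\<close>] by (rule stable_along_execution[OF exe]) (auto intro: past_FAI_step)
    then show ?thesis by (auto simp: past_FAI_def)
  qed
  obtain i where i: "pc (Loc (exe i) p) = L2" "cnt (Loc (exe i) p) = k"
      "pc (Loc (exe (Suc i)) p) = L3" "lt (Loc (exe (Suc i)) p) = v"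
    using \<open>op_time exe p k v\<close> by (auto simp: op_time_def)
  obtain j where j: "pc (Loc (exe j) p) = L2" "cnt (Loc (exe j) p) = k"
      "pc (Loc (exe (Suc j)) p) = L3" "lt (Loc (exe (Suc j)) p) = w"
    using \<open>op_time exe p k w\<close> by (auto simp: op_time_def)
  have "i = j"
    using FAI_before[of i j] FAI_before[of j i] i j by (metis linorder_neqE_nat)
  with i j show ?thesis by simp
qed

theorem mainTheorem10:
  fixes \<delta> :: "('s \<times> 'o \<times> 's \<times> 'r) set" and s0 :: 's
    and exe :: "nat \<Rightarrow> ('p, 'o, 's, 'r) config"
    and p :: 'p and k :: nat and T :: nat
  assumes "execution \<delta> s0 exe"
    and "op_done exe p k T"
  shows "\<forall>T'\<ge>T. \<forall>v. op_time exe p k v \<longrightarrow> Hh (exe T') p \<noteq> (v, Null)"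
proof (intro allI impI)
  fix T' v assume "T \<le> T'" and "op_time exe p k v"
  obtain w T0 r where w: "op_time exe p k w" and "T0 \<le> T"
    and H: "Hh (exe T0) p = (w, r)" and "r \<noteq> Null"
    using assms(2) by (auto simp: op_done_def)
  have "v = w" using op_time_unique[OF assms(1) \<open>op_time exe p k v\<close> w] .
  with H \<open>r \<noteq> Null\<close> have "settled (exe T0) p v"
    by (simp add: settled_def)
  moreover have "T0 \<le> T'" using \<open>T0 \<le> T\<close> \<open>T \<le> T'\<close> by simp
  ultimately have "settled (exe T') p v"
    by (rule stable_along_execution[OF assms(1)])
      (auto intro: settled_step config_inv_execution[OF assms(1)])
  then show "Hh (exe T') p \<noteq> (v, Null)" by (simp add: settled_def)
qed

end
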